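(* Let $L$ be a finite lattice, $(x,y,z)\in L^3$ with $x\le y\le z$, let $S_{x,y}$ be a lower cross-cut of $[x,y]$ and $S_{y,z}$ a lower cross-cut of $[y,z]$, and let $S_{x,y,z}=S_{x,y}\sqcup S_{y,z}$. Then $$J(x,y,z)=\sum_{\substack{A\subseteq S_{x,y,z}\\ \bigvee (A\cap S_{x,y})=y\\ \bigvee(A\cap S_{y,z})=z}}(-1)^{|A|}.$$
   Context: For $u\le v$ in $L$, $[u,v]=\{a\in L: u\le a\le v\}$. A lower cross-cut of $[u,v]$ is a set $S\subseteq[u,v]\setminus\{u\}$ such that for every $b\in[u,v]\setminus(S\cup\{u\})$ there is some $a\in S$ with $a<b$. (Note $S_{x,y}\cap S_{y,z}=\emptyset$ since $y\notin S_{y,z}$.) In the sum, $\bigvee(A\cap S_{x,y})$ is the join in $L$, with the join of the empty subset of $S_{x,y}$ taken to be $x$, and $\bigvee(A\cap S_{y,z})$ is the join in $L$, with the join of the empty subset of $S_{y,z}$ taken to be $y$. Let $\delta_3(x,y,z)=1$ if $x=y=z$ and $0$ otherwise. The function $J$ on triples $x\le y\le z$ of $L$ is the unique integer-valued function satisfying $\sum_{x\le a\le y\le b\le z}J(a,y,b)=\delta_3(x,y,z)$ for all $x\le y\le z$ (sum over $a,b\in L$). *)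

theory Defs
  imports Main
begin

text \<open>A finite lattice is modelled as a finite type of class complete_lattice
(every finite nonempty lattice is complete); Sup is the join in L.\<close>

definition interval :: "'a::order \<Rightarrow> 'a \<Rightarrow> 'a set" where
  "interval u v = {a. u \<le> a \<and> a \<le> v}"

definition lower_cross_cut :: "'a::order \<Rightarrow> 'a \<Rightarrow> 'a set \<Rightarrow> bool" where
  "lower_cross_cut u v S \<longleftrightarrow>
     S \<subseteq> interval u v - {u} \<and>
     (\<forall>b \<in> interval u v - (S \<union> {u}). \<exists>a\<in>S. a < b)"

definition join_base :: "'a::complete_lattice \<Rightarrow> 'a set \<Rightarrow> 'a" where
  "join_base e A = (if A = {} then e else Sup A)"

definition J_prop :: "('a::order \<Rightarrow> 'a \<Rightarrow> 'a \<Rightarrow> int) \<Rightarrow> bool" where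
  "J_prop f \<longleftrightarrow> (\<forall>x y z. x \<le> y \<and> y \<le> z \<longrightarrow>
     (\<Sum>a\<in>interval x y. \<Sum>b\<in>interval y z. f a y b) = (if x = y \<and> y = z then 1 else 0))"

text \<open>J is the (on triples x \<le> y \<le> z unique) function satisfying J_prop.\<close>
definition J :: "'a::order \<Rightarrow> 'a \<Rightarrow> 'a \<Rightarrow> int" where
  "J = (SOME f. J_prop f)"

end

theory Submission
  imports Defs
begin

text \<open>
  Let \<open>\<mu>\<close> be the Moebius function of \<open>L\<close>. The function \<open>\<mu>(a,y) \<mu>(y,b)\<close> satisfies the
  defining identity of \<open>J\<close>, since the double sum factors into two sums that vanish off the
  diagonal; Moebius inversion in the first and then in the last variable shows that every
  solution agrees with it, so \<open>J(x,y,z) = \<mu>(x,y) \<mu>(y,z)\<close>. By Rota's cross-cut theorem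
  \<open>\<mu>(x,y)\<close> is the alternating sum over the subsets of \<open>Sxy\<close> with join \<open>y\<close>, and likewise
  for \<open>\<mu>(y,z)\<close>. The two cross-cuts lie below and strictly above \<open>y\<close> respectively, so they
  are disjoint, and the product of the two alternating sums is the alternating sum over the
  subsets of their union.
\<close>

lemma mem_interval_iff [simp]: "a \<in> interval u v \<longleftrightarrow> u \<le> a \<and> a \<le> v"
  by (simp add: interval_def)

lemma sum_Pow_neg_one_power_card:
  assumes "finite S"
  shows "(\<Sum>A\<in>Pow S. (-1::'b::ring_1) ^ card A) = (if S = {} then 1 else 0)"
proof (cases "S = {}")
  case False
  then have "card {T. T \<subseteq> S \<and> {} \<subseteq> T \<and> even (card T)}
           = card {T. T \<subseteq> S \<and> {} \<subseteq> T \<and> odd (card T)}"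
    using assms by (intro card_subsupersets_even_odd) auto
  with assms False show ?thesis
    by (simp add: sum_alternating_cancels Pow_def)
qed simp

lemma sum_subsets_Un_disjoint:
  fixes P Q :: "'a set \<Rightarrow> bool"
  assumes "finite S" "finite T" "S \<inter> T = {}"
  shows "(\<Sum>A | A \<subseteq> S \<union> T \<and> P (A \<inter> S) \<and> Q (A \<inter> T). (-1::'b::comm_ring_1) ^ card A)
       = (\<Sum>A | A \<subseteq> S \<and> P A. (-1) ^ card A) * (\<Sum>B | B \<subseteq> T \<and> Q B. (-1) ^ card B)"
proof -
  let ?PS = "{A. A \<subseteq> S \<and> P A}" and ?QT = "{B. B \<subseteq> T \<and> Q B}"
  have "(\<Sum>A\<in>?PS. (-1::'b) ^ card A) * (\<Sum>B\<in>?QT. (-1) ^ card B)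
      = (\<Sum>(A, B)\<in>?PS \<times> ?QT. (-1) ^ card (A \<union> B))"
  proof -
    have "card (A \<union> B) = card A + card B" if "A \<subseteq> S" "B \<subseteq> T" for A B
      using that assms by (intro card_Un_disjoint) (auto dest: finite_subset)
    then show ?thesis
      by (auto simp: sum_product sum.cartesian_product power_add intro!: sum.cong)
  qed
  also have "\<dots> = (\<Sum>A | A \<subseteq> S \<union> T \<and> P (A \<inter> S) \<and> Q (A \<inter> T). (-1) ^ card A)"
  proof -
    have parts: "(A \<union> B) \<inter> S = A" "(A \<union> B) \<inter> T = B" if "A \<subseteq> S" "B \<subseteq> T" for A B
      using that assms by auto
    show ?thesis
      by (rule sum.reindex_bij_witness[where j = "\<lambda>(A, B). A \<union> B" and i = "\<lambda>A. (A \<inter> S, A \<inter> T)"])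
        (use parts assms in auto)
  qed
  finally show ?thesis by simp
qed

lemma mobius_inversion_from_above:
  fixes p q :: "'a::{order, finite}" and l F :: "'a \<Rightarrow> 'b::comm_ring_1"
  assumes "p \<le> q"
    and l: "\<And>w. w \<in> interval p q \<Longrightarrow> (\<Sum>u\<in>interval p w. l u) = (if w = p then 1 else 0)"
  shows "F p = (\<Sum>w\<in>interval p q. l w * (\<Sum>u\<in>interval w q. F u))"
proof -
  have "(\<Sum>w\<in>interval p q. l w * (\<Sum>u\<in>interval w q. F u))
      = (\<Sum>w\<in>interval p q. \<Sum>u | u \<in> interval p q \<and> w \<le> u. l w * F u)"
    by (rule sum.cong[OF refl]) (auto simp: sum_distrib_left intro!: sum.cong)
  also have "\<dots> = (\<Sum>u\<in>interval p q. \<Sum>w | w \<in> interval p q \<and> w \<le> u. l w * F u)"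
    by (rule sum.swap_restrict) simp_all
  also have "\<dots> = (\<Sum>u\<in>interval p q. (\<Sum>w\<in>interval p u. l w) * F u)"
    by (rule sum.cong[OF refl]) (auto simp: sum_distrib_right intro!: sum.cong)
  also have "\<dots> = (\<Sum>u\<in>interval p q. if u = p then F u else 0)"
    by (rule sum.cong[OF refl]) (simp add: l)
  also have "\<dots> = F p"
    using assms by simp
  finally show ?thesis ..
qed

lemma mobius_inversion_from_below:
  fixes p q :: "'a::{order, finite}" and r G :: "'a \<Rightarrow> 'b::comm_ring_1"
  assumes "p \<le> q"
    and r: "\<And>w. w \<in> interval p q \<Longrightarrow> (\<Sum>u\<in>interval w q. r u) = (if w = q then 1 else 0)"
  shows "G q = (\<Sum>w\<in>interval p q. (\<Sum>u\<in>interval p w. G u) * r w)"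
proof -
  have "(\<Sum>w\<in>interval p q. (\<Sum>u\<in>interval p w. G u) * r w)
      = (\<Sum>w\<in>interval p q. \<Sum>u | u \<in> interval p q \<and> u \<le> w. G u * r w)"
    by (rule sum.cong[OF refl]) (auto simp: sum_distrib_right intro!: sum.cong)
  also have "\<dots> = (\<Sum>u\<in>interval p q. \<Sum>w | w \<in> interval p q \<and> u \<le> w. G u * r w)"
    by (rule sum.swap_restrict) simp_all
  also have "\<dots> = (\<Sum>u\<in>interval p q. G u * (\<Sum>w\<in>interval u q. r w))"
    by (rule sum.cong[OF refl]) (auto simp: sum_distrib_left intro!: sum.cong)
  also have "\<dots> = (\<Sum>u\<in>interval p q. if u = q then G u else 0)"
    by (rule sum.cong[OF refl]) (simp add: r)
  also have "\<dots> = G q"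
    using assms by simp
  finally show ?thesis ..
qed

definition meet_base :: "'a::complete_lattice \<Rightarrow> 'a set \<Rightarrow> 'a" where
  "meet_base e A = (if A = {} then e else Inf A)"

lemma join_base_in_interval_iff:
  fixes x w :: "'a::complete_lattice"
  assumes "A \<subseteq> {x..}" and "x \<le> w"
  shows "join_base x A \<in> interval x w \<longleftrightarrow> A \<subseteq> {..w}"
proof (cases "A = {}")
  case False
  then obtain a where "a \<in> A" by blast
  with assms(1) have "x \<le> Sup A" by (auto intro: order_trans Sup_upper)
  with False show ?thesis by (auto simp: join_base_def Sup_le_iff)
qed (use assms in \<open>simp add: join_base_def\<close>)

lemma meet_base_in_interval_iff:
  fixes w y :: "'a::complete_lattice"
  assumes "A \<subseteq> {..y}" and "w \<le> y"
  shows "meet_base y A \<in> interval w y \<longleftrightarrow> A \<subseteq> {w..}"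
proof (cases "A = {}")
  case False
  then obtain a where "a \<in> A" by blast
  with assms(1) have "Inf A \<le> y" by (auto intro: order_trans Inf_lower)
  with False show ?thesis by (auto simp: meet_base_def le_Inf_iff)
qed (use assms in \<open>simp add: meet_base_def\<close>)

definition crosscut_sum :: "'a::complete_lattice \<Rightarrow> 'a \<Rightarrow> 'a set \<Rightarrow> int" where
  "crosscut_sum x y S = (\<Sum>A | A \<subseteq> S \<and> join_base x A = y. (-1) ^ card A)"

text \<open>The meet form of the cross-cut formula for the trivial upper cross-cut \<open>[x,y)\<close> of \<open>[x,y]\<close>,
  taken as the definition; the recursion in the first argument is then a plain subset count.\<close>
definition mobius :: "'a::complete_lattice \<Rightarrow> 'a \<Rightarrow> int" where
  "mobius x y = (\<Sum>A | A \<subseteq> interval x y - {y} \<and> meet_base y A = x. (-1) ^ card A)"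

lemma sum_crosscut_sum_interval:
  fixes x w :: "'a::{complete_lattice, finite}"
  assumes "S \<subseteq> {x..}" and "x \<le> w"
  shows "(\<Sum>u\<in>interval x w. crosscut_sum x u S) = (if S \<inter> {..w} = {} then 1 else 0)"
proof -
  have fibre: "{A. A \<subseteq> S \<and> join_base x A = u} = {A \<in> Pow (S \<inter> {..w}). join_base x A = u}"
    if "u \<in> interval x w" for u
    using that assms join_base_in_interval_iff[of _ x w] by blast
  have image: "join_base x ` Pow (S \<inter> {..w}) \<subseteq> interval x w"
    using assms join_base_in_interval_iff[of _ x w] by blast
  have "(\<Sum>u\<in>interval x w. crosscut_sum x u S)
      = (\<Sum>u\<in>interval x w. \<Sum>A | A \<in> Pow (S \<inter> {..w}) \<and> join_base x A = u. (-1) ^ card A)"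
    unfolding crosscut_sum_def by (rule sum.cong[OF refl]) (simp only: fibre)
  also have "\<dots> = (\<Sum>A\<in>Pow (S \<inter> {..w}). (-1) ^ card A)"
    by (rule sum.group[OF _ _ image]) simp_all
  also have "\<dots> = (if S \<inter> {..w} = {} then 1 else 0)"
    by (rule sum_Pow_neg_one_power_card) simp
  finally show ?thesis .
qed

lemma sum_mobius_over_first:
  fixes w y :: "'a::{complete_lattice, finite}"
  assumes "w \<le> y"
  shows "(\<Sum>u\<in>interval w y. mobius u y) = (if w = y then 1 else 0)"
proof -
  let ?T = "interval w y - {y}"
  have fibre: "{A. A \<subseteq> interval u y - {y} \<and> meet_base y A = u} = {A \<in> Pow ?T. meet_base y A = u}"
    if "u \<in> interval w y" for u
    using that meet_base_in_interval_iff[of _ y u] by (auto simp: interval_def)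
  have image: "meet_base y ` Pow ?T \<subseteq> interval w y"
    using assms meet_base_in_interval_iff[of _ y w] by (auto simp: interval_def)
  have "(\<Sum>u\<in>interval w y. mobius u y)
      = (\<Sum>u\<in>interval w y. \<Sum>A | A \<in> Pow ?T \<and> meet_base y A = u. (-1) ^ card A)"
    unfolding mobius_def by (rule sum.cong[OF refl]) (simp only: fibre)
  also have "\<dots> = (\<Sum>A\<in>Pow ?T. (-1) ^ card A)"
    by (rule sum.group[OF _ _ image]) simp_all
  also have "\<dots> = (if ?T = {} then 1 else 0)"
    by (rule sum_Pow_neg_one_power_card) simp
  also have "?T = {} \<longleftrightarrow> w = y"
    using assms by auto
  finally show ?thesis .
qed

lemma crosscut_sum_eq_mobius:
  fixes x y :: "'a::{complete_lattice, finite}"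
  assumes "x \<le> y" and S: "S \<subseteq> {x<..}"
    and coinitial: "\<And>w. x < w \<Longrightarrow> w \<le> y \<Longrightarrow> \<exists>s\<in>S. s \<le> w"
  shows "crosscut_sum x y S = mobius x y"
proof -
  have left: "(\<Sum>u\<in>interval x w. crosscut_sum x u S) = (if w = x then 1 else 0)"
    if "w \<in> interval x y" for w
  proof -
    from that have "x \<le> w" "w \<le> y"
      by simp_all
    have "S \<inter> {..w} = {} \<longleftrightarrow> w = x"
    proof
      assume empty: "S \<inter> {..w} = {}"
      show "w = x"
      proof (rule ccontr)
        assume "w \<noteq> x"
        with \<open>x \<le> w\<close> have "x < w"
          by (simp add: order.strict_iff_order)
        with \<open>w \<le> y\<close> obtain s where "s \<in> S" "s \<le> w"
          using coinitial by blast
        with empty show False by blast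
      qed
    qed (use S in auto)
    moreover have "S \<subseteq> {x..}"
      using S by auto
    ultimately show ?thesis
      using \<open>x \<le> w\<close> by (simp add: sum_crosscut_sum_interval)
  qed
  have "mobius x y = (\<Sum>w\<in>interval x y. crosscut_sum x w S * (\<Sum>u\<in>interval w y. mobius u y))"
    by (rule mobius_inversion_from_above[OF \<open>x \<le> y\<close> left])
  also have "\<dots> = (\<Sum>w\<in>interval x y. if w = y then crosscut_sum x w S else 0)"
    by (rule sum.cong[OF refl]) (simp add: sum_mobius_over_first)
  also have "\<dots> = crosscut_sum x y S"
    using assms by simp
  finally show ?thesis ..
qed

lemma crosscut_sum_lower_cross_cut:
  fixes x y :: "'a::{complete_lattice, finite}"
  assumes "lower_cross_cut x y S" and "x \<le> y"
  shows "crosscut_sum x y S = mobius x y"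
proof (rule crosscut_sum_eq_mobius)
  show "S \<subseteq> {x<..}"
    using assms(1) by (auto simp: lower_cross_cut_def interval_def)
  show "\<exists>s\<in>S. s \<le> w" if "x < w" "w \<le> y" for w
  proof (cases "w \<in> S")
    case False
    with that have "w \<in> interval x y - (S \<union> {x})"
      by auto
    with assms(1) obtain s where "s \<in> S" "s < w"
      unfolding lower_cross_cut_def by blast
    then show ?thesis
      by (blast intro: order.strict_implies_order)
  qed auto
qed (fact assms(2))

lemma sum_mobius_over_second:
  fixes x z :: "'a::{complete_lattice, finite}"
  assumes "x \<le> z"
  shows "(\<Sum>u\<in>interval x z. mobius x u) = (if x = z then 1 else 0)"
proof -
  let ?T = "interval x z - {x}"
  have "mobius x u = crosscut_sum x u ?T" if "u \<in> interval x z" for u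
    using that by (intro crosscut_sum_eq_mobius[symmetric]) (auto simp: interval_def)
  then have "(\<Sum>u\<in>interval x z. mobius x u) = (\<Sum>u\<in>interval x z. crosscut_sum x u ?T)"
    by (rule sum.cong[OF refl])
  also have "\<dots> = (if ?T \<inter> {..z} = {} then 1 else 0)"
    using assms by (intro sum_crosscut_sum_interval) auto
  finally show ?thesis
    using assms by auto
qed

lemma J_prop_mobius:
  "J_prop (\<lambda>a (y::'a::{complete_lattice, finite}) b. mobius a y * mobius y b)"
  unfolding J_prop_def
  by (simp add: sum_product[symmetric] sum_mobius_over_first sum_mobius_over_second)

lemma J_prop_imp_eq_mobius:
  fixes x y z :: "'a::{complete_lattice, finite}"
  assumes "J_prop f" and "x \<le> y" and "y \<le> z"
  shows "f x y z = mobius x y * mobius y z"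
proof -
  have sum_f: "(\<Sum>b\<in>interval y w. f x y b) = (if y = w then mobius x y else 0)"
    if "y \<le> w" for w
  proof -
    have "(\<Sum>b\<in>interval y w. f x y b)
        = (\<Sum>a\<in>interval x y. mobius x a * (\<Sum>a'\<in>interval a y. \<Sum>b\<in>interval y w. f a' y b))"
      using \<open>x \<le> y\<close> by (rule mobius_inversion_from_above) (simp add: sum_mobius_over_second)
    also have "\<dots> = (\<Sum>a\<in>interval x y. if a = y then (if y = w then mobius x y else 0) else 0)"
      using assms(1) that by (intro sum.cong refl) (auto simp: J_prop_def)
    also have "\<dots> = (if y = w then mobius x y else 0)"
      using assms by simp
    finally show ?thesis .
  qed
  have "f x y z = (\<Sum>w\<in>interval y z. (\<Sum>b\<in>interval y w. f x y b) * mobius w z)"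
    using \<open>y \<le> z\<close> by (rule mobius_inversion_from_below) (simp add: sum_mobius_over_first)
  also have "\<dots> = (\<Sum>w\<in>interval y z. if w = y then mobius x y * mobius y z else 0)"
    by (rule sum.cong[OF refl]) (auto simp: sum_f)
  also have "\<dots> = mobius x y * mobius y z"
    using assms by simp
  finally show ?thesis .
qed

lemma J_eq_mobius:
  fixes x y z :: "'a::{complete_lattice, finite}"
  assumes "x \<le> y" and "y \<le> z"
  shows "J x y z = mobius x y * mobius y z"
proof -
  have "J_prop (J :: 'a \<Rightarrow> 'a \<Rightarrow> 'a \<Rightarrow> int)"
    unfolding J_def by (rule someI[where P = J_prop, OF J_prop_mobius])
  then show ?thesis
    using assms by (rule J_prop_imp_eq_mobius)
qed

theorem theorem5p9:
  fixes x y z :: "'a::{complete_lattice, finite}"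
    and Sxy Syz :: "'a set"
  assumes "x \<le> y" and "y \<le> z"
    and "lower_cross_cut x y Sxy"
    and "lower_cross_cut y z Syz"
  shows "J x y z =
    (\<Sum>A \<in> {A. A \<subseteq> Sxy \<union> Syz \<and> join_base x (A \<inter> Sxy) = y
                   \<and> join_base y (A \<inter> Syz) = z}. (-1::int) ^ card A)"
proof -
  have "Sxy \<subseteq> {..y}" "Syz \<subseteq> {y<..}"
    using assms(3,4) by (auto simp: lower_cross_cut_def interval_def)
  then have "Sxy \<inter> Syz = {}"
    by (fastforce simp: order.strict_iff_not)
  have "J x y z = mobius x y * mobius y z"
    using assms(1,2) by (rule J_eq_mobius)
  also have "\<dots> = crosscut_sum x y Sxy * crosscut_sum y z Syz"
    using assms by (simp add: crosscut_sum_lower_cross_cut)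
  also have "\<dots> = (\<Sum>A | A \<subseteq> Sxy \<union> Syz \<and> join_base x (A \<inter> Sxy) = y
                        \<and> join_base y (A \<inter> Syz) = z. (-1) ^ card A)"
    unfolding crosscut_sum_def using \<open>Sxy \<inter> Syz = {}\<close>
    by (intro sum_subsets_Un_disjoint[symmetric]) simp_all
  finally show ?thesis .
qed

end
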